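(* Let $X$ be a correlator of type $X_{-1}$ and let $W_1=x_1^{a_1}x_2+x_2^{a_2}x_3+\dots+x_N^{a_N}$ be a chain summand with $K_{W_1}=1$. Then $K_N\le\ell_N$. If moreover $K_N\ge0$, then the sequence $\mathbf K=(K_1,\dots,K_N)$ is either a concatenation of blocks $(0)$ and $(-1,1)$ followed by a final entry $1$, or a concatenation of blocks $(0)$ and $(-1,1)$ together with exactly one block among $(-1,2)$, $(-2,3)$, $(1)$, followed by a final entry $0$.
   Context: $W=\bigoplus_jW_j$ is an invertible polynomial written as a disjoint sum of atomic summands (variables relabeled within each summand), $E_W$ its exponent matrix, $K_{W_1}=\sum_{i\in W_1}K_i$. A genus-zero correlator (B-model of $W^T$, or A-model of $(W,G_W)$ via Krawitz's map) is of type $X_{-1}$ if it has at least four insertions, has the form $\langle x_N,\dots,x_N,\dots,x_1,\dots,x_1,\alpha,\beta\rangle$ with $x_i$ appearing $\ell_i\ge0$ times and $\alpha=\prod x_i^{m_i}$, $\beta=\prod x_i^{n_i}$ monomials of the standard basis of $\mathrm{Jac}(W^T)$, and, with $b=E_W^{-1}(\ell+m+n+2\cdot\mathbf 1)$ and $K_i=\ell_i-b_i+1$, satisfies $K_i\in\mathbb Z$ and $\sum_iK_i=1$. For a chain summand, the standard basis of its transpose $x_1^{a_1}+x_1x_2^{a_2}+\dots+x_{N-1}x_N^{a_N}$ consists of $\prod x_i^{r_i}$ with $r_i\le a_i-1$ excluding $r_N=a_N-1,r_{N-1}=0,\dots,r_{N-2l}=a_{N-2l}-1,r_{N-2l-1}\ge1$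 ($l\ge0$). *)

theory Defs
  imports Main "HOL.Rat"
begin

text \<open>Atomic invertible polynomials (variables numbered 1..N within each summand):
  Fermat a      :  x_1^a
  Chain [a_1..a_N] :  x_1^{a_1} x_2 + x_2^{a_2} x_3 + ... + x_{N-1}^{a_{N-1}} x_N + x_N^{a_N}
  Loop  [a_1..a_N] :  x_1^{a_1} x_2 + ... + x_{N-1}^{a_{N-1}} x_N + x_N^{a_N} x_1\<close>

datatype atomic = Fermat nat | Chain "nat list" | Loop "nat list"

fun asize :: "atomic \<Rightarrow> nat" where
  "asize (Fermat a) = 1"
| "asize (Chain as) = length as"
| "asize (Loop as) = length as"

fun valid_atomic :: "atomic \<Rightarrow> bool" where
  "valid_atomic (Fermat a) = (a \<ge> 2)"
| "valid_atomic (Chain as) = (as \<noteq> [] \<and> (\<forall>a\<in>set as. a \<ge> 2))"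
| "valid_atomic (Loop as) = (length as \<ge> 2 \<and> (\<forall>a\<in>set as. a \<ge> 2))"

text \<open>Exponent matrix of an atomic summand: entry (i,k) is the exponent of x_k
  in the i-th monomial (1-based).\<close>
fun aexp :: "atomic \<Rightarrow> nat \<Rightarrow> nat \<Rightarrow> nat" where
  "aexp (Fermat a) i k = (if i = 1 \<and> k = 1 then a else 0)"
| "aexp (Chain as) i k =
     (if k = i then as ! (i - 1) else if k = i + 1 then 1 else 0)"
| "aexp (Loop as) i k =
     (if k = i then as ! (i - 1) else if k = i mod length as + 1 then 1 else 0)"

text \<open>Standard basis of Jac(W_j^T) for an atomic summand W_j; a monomial
  prod x_i^{r_i} is given by its exponent function r (1-based).\<close>
fun in_std_basis :: "atomic \<Rightarrow> (nat \<Rightarrow> nat) \<Rightarrow> bool" where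
  "in_std_basis (Fermat a) r = (r 1 \<le> a - 2)"
| "in_std_basis (Loop as) r = (\<forall>i\<in>{1..length as}. r i \<le> as ! (i - 1) - 1)"
| "in_std_basis (Chain as) r =
     (let N = length as in
      (\<forall>i\<in>{1..N}. r i \<le> as ! (i - 1) - 1) \<and>
      \<not> (\<exists>l. 2 * l + 1 \<le> N \<and>
             (\<forall>k\<le>l. r (N - 2 * k) = as ! (N - 2 * k - 1) - 1) \<and>
             (\<forall>k<l. r (N - 2 * k - 1) = 0) \<and>
             (N - 2 * l - 1 = 0 \<or> r (N - 2 * l - 1) \<ge> 1)))"

text \<open>An invertible polynomial W = W_0 + ... + W_{k-1} (disjoint sum of atomic
  summands) is a list of atomic summands; variable (j,i) is the i-th variable of W_j.\<close>
type_synonym invpoly = "atomic list"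

definition valid_invpoly :: "invpoly \<Rightarrow> bool" where
  "valid_invpoly W = (\<forall>j<length W. valid_atomic (W ! j))"

definition vars :: "invpoly \<Rightarrow> (nat \<times> nat) set" where
  "vars W = {(j, i). j < length W \<and> 1 \<le> i \<and> i \<le> asize (W ! j)}"

definition expmat :: "invpoly \<Rightarrow> nat \<times> nat \<Rightarrow> nat \<times> nat \<Rightarrow> nat" where
  "expmat W u w = (if fst u = fst w then aexp (W ! fst u) (snd u) (snd w) else 0)"

definition expmat_inv_apply :: "invpoly \<Rightarrow> (nat \<times> nat \<Rightarrow> rat) \<Rightarrow> (nat \<times> nat \<Rightarrow> rat)" where
  "expmat_inv_apply W v = (THE b.
      (\<forall>u\<in>vars W. (\<Sum>w\<in>vars W. of_nat (expmat W u w) * b w) = v u) \<and>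
      (\<forall>u. u \<notin> vars W \<longrightarrow> b u = 0))"

definition bvec :: "invpoly \<Rightarrow> (nat \<times> nat \<Rightarrow> nat) \<Rightarrow> (nat \<times> nat \<Rightarrow> nat) \<Rightarrow> (nat \<times> nat \<Rightarrow> nat) \<Rightarrow> nat \<times> nat \<Rightarrow> rat" where
  "bvec W l m n = expmat_inv_apply W (\<lambda>u. of_nat (l u + m u + n u + 2))"

definition Kvec :: "invpoly \<Rightarrow> (nat \<times> nat \<Rightarrow> nat) \<Rightarrow> (nat \<times> nat \<Rightarrow> nat) \<Rightarrow> (nat \<times> nat \<Rightarrow> nat) \<Rightarrow> nat \<times> nat \<Rightarrow> rat" where
  "Kvec W l m n u = of_nat (l u) - bvec W l m n u + 1"

text \<open>Correlator <x..x, alpha, beta> with x_u appearing l u times, alpha = prod x_u^{m u},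
  beta = prod x_u^{n u}, of type X_{-1}.\<close>
definition type_X_minus1 :: "invpoly \<Rightarrow> (nat \<times> nat \<Rightarrow> nat) \<Rightarrow> (nat \<times> nat \<Rightarrow> nat) \<Rightarrow> (nat \<times> nat \<Rightarrow> nat) \<Rightarrow> bool" where
  "type_X_minus1 W l m n =
     ((\<Sum>u\<in>vars W. l u) + 2 \<ge> 4 \<and>
      (\<forall>j<length W. in_std_basis (W ! j) (\<lambda>i. m (j, i))) \<and>
      (\<forall>j<length W. in_std_basis (W ! j) (\<lambda>i. n (j, i))) \<and>
      (\<forall>u\<in>vars W. Kvec W l m n u \<in> \<int>) \<and>
      (\<Sum>u\<in>vars W. Kvec W l m n u) = 1)"

definition basic_blocks :: "rat list set" where
  "basic_blocks = {[0], [-1, 1]}"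

definition special_blocks :: "rat list set" where
  "special_blocks = {[-1, 2], [-2, 3], [1]}"

end

theory Submission
  imports Defs
begin

text \<open>For a chain summand the rows of \<open>E\<^sub>W b = \<ell> + m + n + 2\<close> read
  \<open>a i * b i + b (i + 1) = \<ell> i + m i + n i + 2\<close> with \<open>b (N + 1) = 0\<close>, and
  \<open>K i + b i = \<ell> i + 1\<close>. As \<open>0 \<le> m i, n i \<le> a i - 1\<close>, the integers \<open>K i\<close> and \<open>b i\<close>
  satisfy \<open>K i + 1 \<le> (a i - 1) * b i + b (i + 1) \<le> K i + 2 * a i - 1\<close>. The last row forces
  \<open>b N \<ge> 1\<close>, i.e. \<open>K N \<le> \<ell> N\<close>. If also \<open>K N \<ge> 0\<close>, these inequalities bound every tail sum
  \<open>K p + \<dots> + K N\<close> from below by \<open>0\<close>, \<open>1 - b p\<close> and \<open>b p - 3\<close>; hence a negative entry is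
  \<open>-1\<close> followed by a positive one, and reading \<open>K\<close> from the left while the tail sum stays
  in \<open>{0, 1}\<close> peels off blocks \<open>(0)\<close> and \<open>(-1, 1)\<close> and at most once \<open>(1)\<close> or
  \<open>(-1, 2)\<close>. (The block \<open>(-2, 3)\<close> never occurs.)\<close>

section \<open>Solving the exponent system\<close>

fun row_value :: "atomic \<Rightarrow> (nat \<Rightarrow> rat) \<Rightarrow> nat \<Rightarrow> rat" where
  "row_value (Fermat a) f i = of_nat a * f 1"
| "row_value (Chain as) f i = of_nat (as ! (i - 1)) * f i + (if i < length as then f (Suc i) else 0)"
| "row_value (Loop as) f i = of_nat (as ! (i - 1)) * f i + f (i mod length as + 1)"

lemma loop_successor_in_range:
  assumes "length as \<ge> 2" "i \<in> {1..length as}"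
  shows "i mod length as + 1 \<in> {1..length as}" and "i mod length as + 1 \<noteq> i"
proof -
  have "i mod length as < length as"
    using assms(1) by (intro mod_less_divisor) linarith
  then show "i mod length as + 1 \<in> {1..length as}"
    by simp
  show "i mod length as + 1 \<noteq> i"
    using assms by (cases "i < length as") auto
qed

lemma sum_aexp_eq_row_value:
  assumes "valid_atomic A" "i \<in> {1..asize A}"
  shows "(\<Sum>k\<in>{1..asize A}. of_nat (aexp A i k) * f k) = row_value A f i"
proof (cases A)
  case (Fermat a)
  then show ?thesis using assms by auto
next
  case (Chain as)
  have "(\<Sum>k\<in>{1..asize A}. of_nat (aexp A i k) * f k)
      = (\<Sum>k\<in>{1..asize A}. (if k = i then of_nat (as ! (i - 1)) * f i else 0)
                             + (if k = Suc i then f (Suc i) else 0))"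
    by (rule sum.cong) (auto simp: Chain)
  also have "\<dots> = row_value A f i"
    using assms Chain by (simp only: sum.distrib sum.delta finite_atLeastAtMost) auto
  finally show ?thesis .
next
  case (Loop as)
  let ?s = "i mod length as + 1"
  have succ: "?s \<in> {1..length as}" "?s \<noteq> i"
    using loop_successor_in_range[of as i] assms Loop by auto
  have "(\<Sum>k\<in>{1..asize A}. of_nat (aexp A i k) * f k)
      = (\<Sum>k\<in>{1..asize A}. (if k = i then of_nat (as ! (i - 1)) * f i else 0)
                             + (if k = ?s then f ?s else 0))"
    by (rule sum.cong) (use succ in \<open>auto simp: Loop\<close>)
  also have "\<dots> = row_value A f i"
    using assms Loop succ by (simp only: sum.distrib sum.delta finite_atLeastAtMost) auto
  finally show ?thesis .
qed

text \<open>A chain system is solved by back substitution from its last row;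
  \<open>chain_back_subst as v d\<close> is the \<open>(N - d)\<close>-th unknown.\<close>

fun chain_back_subst :: "nat list \<Rightarrow> (nat \<Rightarrow> rat) \<Rightarrow> nat \<Rightarrow> rat" where
  "chain_back_subst as v 0 = v (length as) / of_nat (as ! (length as - 1))"
| "chain_back_subst as v (Suc d) =
     (v (length as - Suc d) - chain_back_subst as v d) / of_nat (as ! (length as - Suc d - 1))"

text \<open>A loop system is solved by forward substitution from an unknown first value \<open>t\<close>:
  the \<open>(k + 1)\<close>-th unknown is \<open>loop_offset as v k + loop_slope as k * t\<close>, and the last
  row determines \<open>t\<close> because \<open>\<bar>a N * loop_slope as (N - 1)\<bar> \<ge> 2\<close>.\<close>

primrec loop_offset :: "nat list \<Rightarrow> (nat \<Rightarrow> rat) \<Rightarrow> nat \<Rightarrow> rat" where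
  "loop_offset as v 0 = 0"
| "loop_offset as v (Suc k) = v (Suc k) - of_nat (as ! k) * loop_offset as v k"

primrec loop_slope :: "nat list \<Rightarrow> nat \<Rightarrow> rat" where
  "loop_slope as 0 = 1"
| "loop_slope as (Suc k) = - of_nat (as ! k) * loop_slope as k"

definition loop_start :: "nat list \<Rightarrow> (nat \<Rightarrow> rat) \<Rightarrow> rat" where
  "loop_start as v =
     (v (length as) - of_nat (as ! (length as - 1)) * loop_offset as v (length as - 1))
     / (of_nat (as ! (length as - 1)) * loop_slope as (length as - 1) + 1)"

fun atomic_solution :: "atomic \<Rightarrow> (nat \<Rightarrow> rat) \<Rightarrow> nat \<Rightarrow> rat" where
  "atomic_solution (Fermat a) v i = v 1 / of_nat a"
| "atomic_solution (Chain as) v i = chain_back_subst as v (length as - i)"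
| "atomic_solution (Loop as) v i = loop_offset as v (i - 1) + loop_slope as (i - 1) * loop_start as v"

lemma abs_loop_slope_ge_1:
  assumes "\<forall>a\<in>set as. a \<ge> 2" "k \<le> length as"
  shows "\<bar>loop_slope as k\<bar> \<ge> 1"
  using assms(2)
proof (induction k)
  case 0
  then show ?case by simp
next
  case (Suc k)
  have "as ! k \<ge> 2"
    using Suc.prems by (intro assms(1)[rule_format] nth_mem) simp
  then have "(1::rat) \<le> of_nat (as ! k)"
    by simp
  then have "1 * 1 \<le> of_nat (as ! k) * \<bar>loop_slope as k\<bar>"
    using Suc by (intro mult_mono) auto
  then show ?case by (simp add: abs_mult)
qed

lemma loop_start_denominator_nonzero:
  assumes "valid_atomic (Loop as)"
  shows "of_nat (as ! (length as - 1)) * loop_slope as (length as - 1) + 1 \<noteq> (0::rat)"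
proof -
  have "as ! (length as - 1) \<ge> 2" "\<bar>loop_slope as (length as - 1)\<bar> \<ge> 1"
    using assms abs_loop_slope_ge_1[of as "length as - 1"] by auto
  then have "(2::rat) * 1 \<le> of_nat (as ! (length as - 1)) * \<bar>loop_slope as (length as - 1)\<bar>"
    by (intro mult_mono) auto
  then show ?thesis by (auto simp: abs_mult)
qed

lemma row_value_atomic_solution:
  assumes "valid_atomic A" "i \<in> {1..asize A}"
  shows "row_value A (atomic_solution A v) i = v i"
proof (cases A)
  case (Fermat a)
  then show ?thesis using assms by auto
next
  case (Chain as)
  have ai: "as ! (i - 1) \<ge> 2" using assms Chain by auto
  show ?thesis
  proof (cases "i < length as")
    case True
    then have "length as - i = Suc (length as - Suc i)" "length as - Suc (length as - Suc i) = i"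
      by simp_all
    then show ?thesis using True ai Chain by simp
  next
    case False
    then have "i = length as" using assms Chain by auto
    then show ?thesis using ai Chain by simp
  qed
next
  case (Loop as)
  let ?N = "length as"
  show ?thesis
  proof (cases "i < ?N")
    case True
    have "Suc (i - 1) = i" using assms by auto
    then have "loop_slope as i = - of_nat (as ! (i - 1)) * loop_slope as (i - 1)"
      "loop_offset as v i = v i - of_nat (as ! (i - 1)) * loop_offset as v (i - 1)"
      using loop_slope.simps(2)[of as "i - 1"] loop_offset.simps(2)[of as v "i - 1"] by simp_all
    then show ?thesis using True Loop by (simp add: algebra_simps)
  next
    case False
    then have iN: "i = ?N" using assms Loop by auto
    have N2: "?N \<ge> 2" using assms Loop by auto
    have "of_nat (as ! (?N - 1)) * (loop_offset as v (?N - 1) + loop_slope as (?N - 1) * loop_start as v)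
          + loop_start as v
        = of_nat (as ! (?N - 1)) * loop_offset as v (?N - 1)
          + (of_nat (as ! (?N - 1)) * loop_slope as (?N - 1) + 1) * loop_start as v"
      by (simp add: algebra_simps)
    also have "\<dots> = v ?N"
      using loop_start_denominator_nonzero assms Loop unfolding loop_start_def by simp
    finally show ?thesis using iN N2 Loop by simp
  qed
qed

text \<open>Diagonal dominance: the diagonal entry of every row is at least 2 and the only
  other entry is at most 1, so a homogeneous row vanishes at an entry of maximal modulus.\<close>

lemma row_value_zero_at_max:
  assumes "valid_atomic A" "i \<in> {1..asize A}"
    and "\<forall>k\<in>{1..asize A}. \<bar>f k\<bar> \<le> \<bar>f i\<bar>" "row_value A f i = 0"
  shows "f i = 0"
proof -
  obtain a e where ae: "row_value A f i = of_nat a * f i + e" "a \<ge> 2" "\<bar>e\<bar> \<le> \<bar>f i\<bar>"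
  proof (cases A)
    case (Fermat a)
    then show ?thesis using that[of a 0] assms by auto
  next
    case (Chain as)
    then show ?thesis
      using that[of "as ! (i - 1)" "if i < length as then f (Suc i) else 0"] assms by auto
  next
    case (Loop as)
    then show ?thesis
      using that[of "as ! (i - 1)" "f (i mod length as + 1)"] assms
        loop_successor_in_range(1)[of as i] by auto
  qed
  have "of_nat a * \<bar>f i\<bar> \<le> \<bar>f i\<bar>"
    using ae assms(4) by (simp add: abs_mult add_eq_0_iff2)
  moreover have "2 * \<bar>f i\<bar> \<le> of_nat a * \<bar>f i\<bar>"
    using ae by (intro mult_right_mono) auto
  ultimately show ?thesis by simp
qed

lemma vars_eq_Sigma: "vars W = (SIGMA j:{..<length W}. {1..asize (W ! j)})"
  by (auto simp: vars_def)

lemma finite_vars: "finite (vars W)"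
  unfolding vars_eq_Sigma by auto

lemma sum_expmat_eq_sum_aexp:
  assumes "(j, i) \<in> vars W"
  shows "(\<Sum>w\<in>vars W. of_nat (expmat W (j, i) w) * (c w :: rat))
       = (\<Sum>k\<in>{1..asize (W ! j)}. of_nat (aexp (W ! j) i k) * c (j, k))"
proof -
  have j: "j < length W" using assms by (auto simp: vars_def)
  have "(\<Sum>w\<in>vars W. of_nat (expmat W (j, i) w) * c w)
      = (\<Sum>w\<in>vars W. if fst w = j then of_nat (aexp (W ! j) i (snd w)) * c w else 0)"
    by (rule sum.cong) (auto simp: expmat_def)
  also have "\<dots> = (\<Sum>w\<in>{w\<in>vars W. fst w = j}. of_nat (aexp (W ! j) i (snd w)) * c w)"
    using finite_vars by (simp add: sum.inter_filter)
  also have "{w\<in>vars W. fst w = j} = Pair j ` {1..asize (W ! j)}"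
    using j by (auto simp: vars_def)
  finally show ?thesis
    by (simp add: sum.reindex inj_on_def)
qed

lemma sum_expmat_eq_row_value:
  assumes "valid_invpoly W" "(j, i) \<in> vars W"
  shows "(\<Sum>w\<in>vars W. of_nat (expmat W (j, i) w) * b w) = row_value (W ! j) (\<lambda>k. b (j, k)) i"
proof -
  have "j < length W" "i \<in> {1..asize (W ! j)}" using assms(2) by (auto simp: vars_def)
  then show ?thesis
    using assms sum_expmat_eq_sum_aexp sum_aexp_eq_row_value by (simp add: valid_invpoly_def)
qed

definition solves_expmat :: "invpoly \<Rightarrow> (nat \<times> nat \<Rightarrow> rat) \<Rightarrow> (nat \<times> nat \<Rightarrow> rat) \<Rightarrow> bool" where
  "solves_expmat W v b \<longleftrightarrow>
     (\<forall>u\<in>vars W. (\<Sum>w\<in>vars W. of_nat (expmat W u w) * b w) = v u) \<and>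
     (\<forall>u. u \<notin> vars W \<longrightarrow> b u = 0)"

lemma solves_expmat_exists:
  assumes "valid_invpoly W"
  shows "\<exists>b. solves_expmat W v b"
proof
  define b where "b u = (if u \<in> vars W then atomic_solution (W ! fst u) (\<lambda>i. v (fst u, i)) (snd u) else 0)"
    for u
  show "solves_expmat W v b"
    unfolding solves_expmat_def
  proof (intro conjI ballI allI impI)
    fix u assume u: "u \<in> vars W"
    obtain j i where ji: "u = (j, i)" by force
    have j: "j < length W" and i: "i \<in> {1..asize (W ! j)}" using u ji by (auto simp: vars_def)
    have va: "valid_atomic (W ! j)" using assms j by (simp add: valid_invpoly_def)
    have "(\<Sum>w\<in>vars W. of_nat (expmat W u w) * b w)
        = (\<Sum>k\<in>{1..asize (W ! j)}. of_nat (aexp (W ! j) i k) * b (j, k))"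
      using sum_expmat_eq_sum_aexp u ji by simp
    also have "\<dots> = (\<Sum>k\<in>{1..asize (W ! j)}.
                        of_nat (aexp (W ! j) i k) * atomic_solution (W ! j) (\<lambda>i. v (j, i)) k)"
      using j by (intro sum.cong) (auto simp: b_def vars_def)
    also have "\<dots> = v u"
      using sum_aexp_eq_row_value[OF va i] row_value_atomic_solution[OF va i] ji by simp
    finally show "(\<Sum>w\<in>vars W. of_nat (expmat W u w) * b w) = v u" .
  qed (simp add: b_def)
qed

lemma solves_expmat_homogeneous_zero:
  assumes "valid_invpoly W" "solves_expmat W (\<lambda>_. 0) c"
  shows "c = (\<lambda>_. 0)"
proof -
  have vanish: "c u = 0" if "u \<in> vars W" for u
  proof -
    define M where "M = Max ((\<lambda>u. \<bar>c u\<bar>) ` vars W)"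
    have le_M: "\<bar>c w\<bar> \<le> M" if "w \<in> vars W" for w
      unfolding M_def using that finite_vars by (intro Max_ge) auto
    have "M \<in> (\<lambda>u. \<bar>c u\<bar>) ` vars W"
      unfolding M_def using that finite_vars by (intro Max_in) auto
    then obtain j i where ji: "(j, i) \<in> vars W" "\<bar>c (j, i)\<bar> = M" by auto
    have j: "j < length W" and i: "i \<in> {1..asize (W ! j)}" using ji by (auto simp: vars_def)
    have "row_value (W ! j) (\<lambda>k. c (j, k)) i = 0"
      using assms(2) sum_expmat_eq_row_value[OF assms(1) ji(1), of c] ji(1) by (simp add: solves_expmat_def)
    moreover have "\<forall>k\<in>{1..asize (W ! j)}. \<bar>c (j, k)\<bar> \<le> \<bar>c (j, i)\<bar>"
      using le_M ji j by (auto simp: vars_def)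
    ultimately have "M = 0"
      using row_value_zero_at_max[of "W ! j" i] assms(1) i j ji by (auto simp: valid_invpoly_def)
    then show ?thesis using le_M[OF that] by simp
  qed
  show ?thesis
  proof
    fix u
    show "c u = 0"
    proof (cases "u \<in> vars W")
      case True
      then show ?thesis by (rule vanish)
    next
      case False
      then show ?thesis using assms(2) unfolding solves_expmat_def by blast
    qed
  qed
qed

lemma solves_expmat_unique:
  assumes "valid_invpoly W" "solves_expmat W v b" "solves_expmat W v b'"
  shows "b = b'"
proof -
  have "solves_expmat W (\<lambda>_. 0) (\<lambda>u. b u - b' u)"
    using assms(2,3)
    by (simp add: solves_expmat_def right_diff_distrib sum_subtractf)
  then have "(\<lambda>u. b u - b' u) = (\<lambda>_. 0)"
    by (rule solves_expmat_homogeneous_zero[OF assms(1)])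
  then show ?thesis
    by (simp add: fun_eq_iff)
qed

lemma solves_expmat_bvec:
  assumes "valid_invpoly W"
  shows "solves_expmat W (\<lambda>u. of_nat (l u + m u + n u + 2)) (bvec W l m n)"
proof -
  let ?v = "\<lambda>u. of_nat (l u + m u + n u + 2) :: rat"
  have "\<exists>!b. solves_expmat W ?v b"
    using solves_expmat_exists solves_expmat_unique assms by blast
  then show ?thesis
    unfolding bvec_def expmat_inv_apply_def solves_expmat_def[symmetric] by (rule theI')
qed

lemma bvec_chain_row:
  assumes "valid_invpoly W" "j < length W" "W ! j = Chain as" "i \<in> {1..length as}"
  shows "of_nat (as ! (i - 1)) * bvec W l m n (j, i)
           + (if i < length as then bvec W l m n (j, Suc i) else 0)
         = of_nat (l (j, i) + m (j, i) + n (j, i) + 2)"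
proof -
  have ji: "(j, i) \<in> vars W" using assms by (simp add: vars_def)
  have "(\<Sum>w\<in>vars W. of_nat (expmat W (j, i) w) * bvec W l m n w)
      = of_nat (l (j, i) + m (j, i) + n (j, i) + 2)"
    using solves_expmat_bvec[OF assms(1), of l m n] ji unfolding solves_expmat_def by blast
  then show ?thesis
    using sum_expmat_eq_row_value[OF assms(1) ji, of "bvec W l m n"] assms(3) by simp
qed

text \<open>Only these coordinatewise bounds of the standard basis enter the argument.\<close>

lemma in_std_basis_Chain_le:
  assumes "in_std_basis (Chain as) r" "i \<in> {1..length as}"
  shows "r i \<le> as ! (i - 1) - 1"
proof -
  have "\<forall>i\<in>{1..length as}. r i \<le> as ! (i - 1) - 1"
    using assms(1) unfolding in_std_basis.simps Let_def by (rule conjunct1)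
  then show ?thesis using assms(2) by blast
qed

section \<open>The combinatorics of the sequence K\<close>

definition basic_then_0 :: "rat list \<Rightarrow> bool" where
  "basic_then_0 xs \<longleftrightarrow> (\<exists>bs. set bs \<subseteq> basic_blocks \<and> xs = concat bs @ [0])"

definition chain_K_shape :: "rat list \<Rightarrow> bool" where
  "chain_K_shape xs \<longleftrightarrow>
     (\<exists>bs. set bs \<subseteq> basic_blocks \<and> xs = concat bs @ [1]) \<or>
     (\<exists>bs1 s bs2. set bs1 \<subseteq> basic_blocks \<and> set bs2 \<subseteq> basic_blocks \<and>
        s \<in> special_blocks \<and> xs = concat bs1 @ s @ concat bs2 @ [0])"

lemma basic_then_0_0: "basic_then_0 [0]"
  unfolding basic_then_0_def by (intro exI[of _ "[]"]) simp

lemma chain_K_shape_1: "chain_K_shape [1]"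
  unfolding chain_K_shape_def by (intro disjI1 exI[of _ "[]"]) simp

lemma basic_then_0_append_basic:
  assumes "bl \<in> basic_blocks" "basic_then_0 xs"
  shows "basic_then_0 (bl @ xs)"
proof -
  obtain bs where "set bs \<subseteq> basic_blocks" "xs = concat bs @ [0]"
    using assms(2) unfolding basic_then_0_def by blast
  then show ?thesis
    using assms(1) unfolding basic_then_0_def by (intro exI[of _ "bl # bs"]) simp
qed

lemma chain_K_shape_append_basic:
  assumes "bl \<in> basic_blocks" "chain_K_shape xs"
  shows "chain_K_shape (bl @ xs)"
proof -
  consider (plain) bs where "set bs \<subseteq> basic_blocks" "xs = concat bs @ [1]"
    | (special) bs1 s bs2 where "set bs1 \<subseteq> basic_blocks" "set bs2 \<subseteq> basic_blocks"
        "s \<in> special_blocks" "xs = concat bs1 @ s @ concat bs2 @ [0]"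
    using assms(2) unfolding chain_K_shape_def by blast
  then show ?thesis
  proof cases
    case plain
    then have "set (bl # bs) \<subseteq> basic_blocks \<and> bl @ xs = concat (bl # bs) @ [1]"
      using assms(1) by simp
    then show ?thesis unfolding chain_K_shape_def by (intro disjI1 exI)
  next
    case special
    then have "set (bl # bs1) \<subseteq> basic_blocks \<and> set bs2 \<subseteq> basic_blocks \<and> s \<in> special_blocks
        \<and> bl @ xs = concat (bl # bs1) @ s @ concat bs2 @ [0]"
      using assms(1) by simp
    then show ?thesis unfolding chain_K_shape_def by (intro disjI2 exI)
  qed
qed

lemma chain_K_shape_append_special:
  assumes "s \<in> special_blocks" "basic_then_0 xs"
  shows "chain_K_shape (s @ xs)"
proof -
  obtain bs where "set bs \<subseteq> basic_blocks" "xs = concat bs @ [0]"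
    using assms(2) unfolding basic_then_0_def by blast
  then have "set [] \<subseteq> basic_blocks \<and> set bs \<subseteq> basic_blocks \<and> s \<in> special_blocks
      \<and> s @ xs = concat [] @ s @ concat bs @ [0]"
    using assms(1) by simp
  then show ?thesis
    unfolding chain_K_shape_def by (intro disjI2 exI)
qed

text \<open>\<open>a\<close>, \<open>b\<close> and \<open>K\<close> stand for the exponents of a chain summand, the corresponding
  entries of \<open>E\<^sub>W\<^sup>-\<^sup>1 (\<ell> + m + n + 2)\<close> (extended by \<open>b (N + 1) = 0\<close>) and the \<open>K i\<close>.\<close>

locale chain_inequalities =
  fixes N :: nat and a b K :: "nat \<Rightarrow> int"
  assumes N_pos: "N \<ge> 1"
    and a_ge_2: "\<And>i. i \<in> {1..N} \<Longrightarrow> a i \<ge> 2"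
    and b_end: "b (Suc N) = 0"
    and K_plus_b: "\<And>i. i \<in> {1..N} \<Longrightarrow> K i + b i \<ge> 1"
    and row_lower: "\<And>i. i \<in> {1..N} \<Longrightarrow> K i + 1 \<le> (a i - 1) * b i + b (Suc i)"
    and row_upper: "\<And>i. i \<in> {1..N} \<Longrightarrow> (a i - 1) * b i + b (Suc i) \<le> K i + 2 * a i - 1"
begin

lemma K_lower_bound:
  assumes "i \<in> {1..N}" "b i \<ge> 2"
  shows "b i + b (Suc i) - 3 \<le> K i"
proof -
  have "b i - 2 = 1 * (b i - 2)" by simp
  also have "\<dots> \<le> (a i - 1) * (b i - 2)"
    using a_ge_2[OF assms(1)] assms(2) by (intro mult_right_mono) auto
  also have "\<dots> = (a i - 1) * b i - 2 * a i + 2"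
    by (simp add: algebra_simps)
  finally show ?thesis
    using row_upper[OF assms(1)] by linarith
qed

lemma b_Suc_lower_bound:
  assumes "i \<in> {1..N}" "b i \<le> 0"
  shows "K i + 1 - b i \<le> b (Suc i)"
proof -
  have "(a i - 1) * b i \<le> 1 * b i"
    using a_ge_2[OF assms(1)] assms(2) by (intro mult_right_mono_neg) auto
  then show ?thesis
    using row_lower[OF assms(1)] by linarith
qed

lemma b_last_pos: "b N \<ge> 1"
proof (rule ccontr)
  assume "\<not> b N \<ge> 1"
  moreover have N: "N \<in> {1..N}" using N_pos by simp
  ultimately have "(a N - 1) * b N \<le> 0"
    using a_ge_2[OF N] by (intro mult_nonneg_nonpos) auto
  then show False
    using \<open>\<not> b N \<ge> 1\<close> K_plus_b[OF N] row_lower[OF N] b_end by simp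
qed

definition tail :: "nat \<Rightarrow> int" where
  "tail p = (\<Sum>i=p..N. K i)"

definition K_list :: "nat \<Rightarrow> rat list" where
  "K_list p = map (\<lambda>i. of_int (K i)) [p..<N + 1]"

lemma tail_Suc: "p \<le> N \<Longrightarrow> tail p = K p + tail (Suc p)"
  unfolding tail_def by (rule sum.atLeast_Suc_atMost)

lemma tail_last: "tail N = K N"
  unfolding tail_def by simp

lemma K_list_Cons: "p \<le> N \<Longrightarrow> K_list p = of_int (K p) # K_list (Suc p)"
  unfolding K_list_def by (subst upt_conv_Cons) auto

lemma K_list_last: "K_list N = [of_int (K N)]"
  unfolding K_list_def by simp

end

locale chain_inequalities_nonneg = chain_inequalities +
  assumes K_last_nonneg: "K N \<ge> 0"
begin

lemma tail_lower_bounds: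
  assumes "1 \<le> p" "p \<le> N"
  shows "0 \<le> tail p \<and> 1 - b p \<le> tail p \<and> b p - 3 \<le> tail p"
  using assms
proof (induction "N - p" arbitrary: p rule: less_induct)
  case less
  have p: "p \<in> {1..N}" using less.prems by simp
  have lower: "K p \<ge> 1 - b p" "b p \<ge> 2 \<Longrightarrow> K p \<ge> b p + b (Suc p) - 3"
    using K_plus_b[OF p] K_lower_bound[OF p] by auto
  show ?case
  proof (cases "p = N")
    case True
    then show ?thesis using lower tail_last K_last_nonneg b_end by force
  next
    case False
    then have "0 \<le> tail (Suc p) \<and> 1 - b (Suc p) \<le> tail (Suc p)"
      using less.hyps[of "Suc p"] less.prems by auto
    then show ?thesis using lower tail_Suc[of p] less.prems by force
  qed
qed

text \<open>\<open>K p < 0\<close> forces \<open>b p \<ge> 2\<close> and then \<open>b (p + 1) \<le> 0\<close>, which pushes \<open>b (p + 2)\<close>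
  and hence \<open>tail (p + 2)\<close> up.\<close>

lemma negative_entry:
  assumes p: "p \<in> {1..N}" and "K p < 0" and "tail p \<le> 1"
  shows "Suc (Suc p) \<le> N" "K p = -1" "K (Suc p) \<ge> 1"
proof -
  have bp: "b p \<ge> 2" using K_plus_b[OF p] \<open>K p < 0\<close> by simp
  have Kp: "K p \<ge> b p + b (Suc p) - 3" by (rule K_lower_bound[OF p bp])
  have "p \<noteq> N" using tail_lower_bounds[of p] p \<open>K p < 0\<close> tail_last by auto
  moreover have "Suc p \<noteq> N" using Kp bp b_last_pos \<open>K p < 0\<close> K_plus_b[OF p] by auto
  ultimately show SS: "Suc (Suc p) \<le> N" using p by auto
  then have p1: "Suc p \<in> {1..N}" by simp
  have bp1: "b (Suc p) \<le> 0" using K_plus_b[OF p] Kp \<open>K p < 0\<close> by simp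
  have "K (Suc p) + 1 - b (Suc p) \<le> b (Suc (Suc p))" by (rule b_Suc_lower_bound[OF p1 bp1])
  moreover have "0 \<le> tail (Suc (Suc p))" "b (Suc (Suc p)) - 3 \<le> tail (Suc (Suc p))"
    using tail_lower_bounds[of "Suc (Suc p)"] SS by auto
  moreover have "tail p = K p + K (Suc p) + tail (Suc (Suc p))"
    using tail_Suc[of p] tail_Suc[of "Suc p"] SS by simp
  ultimately show "K p = -1" "K (Suc p) \<ge> 1"
    using \<open>tail p \<le> 1\<close> \<open>K p < 0\<close> Kp bp K_plus_b[OF p] K_plus_b[OF p1] by auto
qed

lemma tail_shape:
  assumes "1 \<le> p" "p \<le> N"
  shows "(tail p = 0 \<longrightarrow> basic_then_0 (K_list p)) \<and> (tail p = 1 \<longrightarrow> chain_K_shape (K_list p))"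
  using assms
proof (induction "N - p" arbitrary: p rule: less_induct)
  case less
  show ?case
  proof (cases "p = N")
    case True
    then show ?thesis using K_list_last tail_last basic_then_0_0 chain_K_shape_1 by auto
  next
    case False
    then have p: "p \<in> {1..N}" "p < N" using less.prems by auto
    have IH: "(tail q = 0 \<longrightarrow> basic_then_0 (K_list q)) \<and> (tail q = 1 \<longrightarrow> chain_K_shape (K_list q))"
      if "p < q" "q \<le> N" for q
      using less.hyps[of q] that less.prems by auto
    have Kp: "K_list p = [of_int (K p)] @ K_list (Suc p)"
      using K_list_Cons p by simp
    have tp: "tail p = K p + tail (Suc p)" "tail (Suc p) \<ge> 0"
      using tail_Suc tail_lower_bounds[of "Suc p"] p by auto
    consider "K p = 0" | "K p > 0" | "K p < 0" by linarith
    then show ?thesis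
    proof cases
      case 1
      have "[0] \<in> basic_blocks" by (simp add: basic_blocks_def)
      then show ?thesis
        using 1 IH[of "Suc p"] p tp Kp basic_then_0_append_basic[of "[0]"]
          chain_K_shape_append_basic[of "[0]"] by auto
    next
      case 2
      then have "K p = 1" "tail (Suc p) = 0" if "tail p \<le> 1" using tp that by auto
      moreover have "[1] \<in> special_blocks" by (simp add: special_blocks_def)
      ultimately show ?thesis
        using IH[of "Suc p"] p tp Kp chain_K_shape_append_special[of "[1]"] by auto
    next
      case 3
      have neg: "Suc (Suc p) \<le> N" "K p = -1" "K (Suc p) \<ge> 1" if "tail p \<le> 1"
        using negative_entry[OF p(1) 3 that] by auto
      have split: "K_list p = [-1, of_int (K (Suc p))] @ K_list (Suc (Suc p))"
        "tail p = -1 + K (Suc p) + tail (Suc (Suc p))" "tail (Suc (Suc p)) \<ge> 0"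
        if "tail p \<le> 1"
        using neg[OF that] K_list_Cons[of p] K_list_Cons[of "Suc p"] tail_Suc[of p]
          tail_Suc[of "Suc p"] tail_lower_bounds[of "Suc (Suc p)"] by auto
      show ?thesis
      proof (intro conjI impI)
        assume "tail p = 0"
        then have "K (Suc p) = 1" "tail (Suc (Suc p)) = 0"
          using neg split by auto
        moreover have "[-1, 1] \<in> basic_blocks" by (simp add: basic_blocks_def)
        ultimately show "basic_then_0 (K_list p)"
          using split \<open>tail p = 0\<close> IH[of "Suc (Suc p)"] neg
            basic_then_0_append_basic[of "[-1, 1]"] by auto
      next
        assume "tail p = 1"
        then have "K (Suc p) = 1 \<and> tail (Suc (Suc p)) = 1 \<or> K (Suc p) = 2 \<and> tail (Suc (Suc p)) = 0"
          using neg split by auto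
        moreover have "[-1, 1] \<in> basic_blocks" "[-1, 2] \<in> special_blocks"
          by (simp_all add: basic_blocks_def special_blocks_def)
        ultimately show "chain_K_shape (K_list p)"
          using split \<open>tail p = 1\<close> IH[of "Suc (Suc p)"] neg
            chain_K_shape_append_basic[of "[-1, 1]"] chain_K_shape_append_special[of "[-1, 2]"]
          by auto
      qed
    qed
  qed
qed

lemma K_sequence_shape:
  assumes "(\<Sum>i=1..N. K i) = 1"
  shows "chain_K_shape (map (\<lambda>i. of_int (K i)) [1..<N + 1])"
  using tail_shape[of 1] N_pos assms unfolding tail_def K_list_def by simp

end

section \<open>The chain summand of a correlator of type \<open>X\<^sub>-\<^sub>1\<close>\<close>

lemma type_X_minus1_Kvec_int:
  assumes "type_X_minus1 W l m n" "j < length W" "W ! j = Chain as"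
  obtains K :: "nat \<Rightarrow> int" where "\<And>i. i \<in> {1..length as} \<Longrightarrow> Kvec W l m n (j, i) = of_int (K i)"
proof -
  have "Kvec W l m n (j, i) \<in> \<int>" if "i \<in> {1..length as}" for i
    using assms that unfolding type_X_minus1_def vars_def by auto
  then have "\<forall>i\<in>{1..length as}. \<exists>z. Kvec W l m n (j, i) = of_int z"
    by (meson Ints_cases)
  then show ?thesis
    using that by metis
qed

lemma chain_inequalities_of_type_X_minus1:
  assumes valid: "valid_invpoly W" and X: "type_X_minus1 W l m n"
    and j: "j < length W" and Wj: "W ! j = Chain as"
    and K: "\<And>i. i \<in> {1..length as} \<Longrightarrow> Kvec W l m n (j, i) = of_int (K i)"
  shows "chain_inequalities (length as) (\<lambda>i. int (as ! (i - 1)))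
           (\<lambda>i. if i \<le> length as then int (l (j, i)) + 1 - K i else 0) K"
proof -
  let ?N = "length as"
  have va: "valid_atomic (Chain as)"
    using valid j Wj unfolding valid_invpoly_def by metis
  define a where "a i = int (as ! (i - 1))" for i
  define b where "b i = (if i \<le> ?N then int (l (j, i)) + 1 - K i else 0)" for i
  have a_ge_2: "a i \<ge> 2" if "i \<in> {1..?N}" for i
    using va that unfolding a_def by (auto simp: Suc_le_eq)
  have row: "a i * b i + b (Suc i) = int (l (j, i)) + int (m (j, i)) + int (n (j, i)) + 2"
    if i: "i \<in> {1..?N}" for i
  proof -
    have "bvec W l m n (j, k) = of_int (b k)" if "k \<in> {1..?N}" for k
      using K[OF that] that unfolding Kvec_def b_def by simp
    then have "of_nat (as ! (i - 1)) * of_int (b i) + of_int (b (Suc i))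
               = (of_nat (l (j, i) + m (j, i) + n (j, i) + 2) :: rat)"
      using bvec_chain_row[OF valid j Wj i, of l m n] i by (auto simp: b_def split: if_splits)
    then have "(of_int (a i * b i + b (Suc i)) :: rat)
               = of_int (int (l (j, i)) + int (m (j, i)) + int (n (j, i)) + 2)"
      unfolding a_def by simp
    then show ?thesis by (simp only: of_int_eq_iff)
  qed
  have basis: "m (j, i) \<le> as ! (i - 1) - 1" "n (j, i) \<le> as ! (i - 1) - 1" if "i \<in> {1..?N}" for i
    using X j Wj that in_std_basis_Chain_le unfolding type_X_minus1_def by fastforce+
  have rewrite: "(a i - 1) * b i + b (Suc i) = a i * b i + b (Suc i) - b i" for i
    by (simp add: algebra_simps)
  show ?thesis
  proof (unfold_locales, fold a_def b_def)
    show "1 \<le> ?N" using va by (simp add: Suc_le_eq)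
    show "b (Suc ?N) = 0" by (simp add: b_def)
    fix i assume i: "i \<in> {1..?N}"
    show "2 \<le> a i" by (rule a_ge_2[OF i])
    show "1 \<le> K i + b i" using i by (simp add: b_def)
    show "K i + 1 \<le> (a i - 1) * b i + b (Suc i)"
      using row[OF i] i unfolding rewrite by (simp add: b_def)
    show "(a i - 1) * b i + b (Suc i) \<le> K i + 2 * a i - 1"
      using row[OF i] basis[OF i] a_ge_2[OF i] i unfolding rewrite by (simp add: a_def b_def)
  qed
qed

theorem lemma6p13:
  fixes W :: invpoly and l m n :: "nat \<times> nat \<Rightarrow> nat"
    and j :: nat and as :: "nat list"
  assumes "valid_invpoly W"
    and "type_X_minus1 W l m n"
    and "j < length W" and "W ! j = Chain as"
    and "(\<Sum>i=1..length as. Kvec W l m n (j, i)) = 1"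
  shows "Kvec W l m n (j, length as) \<le> of_nat (l (j, length as))
     \<and> (Kvec W l m n (j, length as) \<ge> 0 \<longrightarrow>
         (let Ks = map (\<lambda>i. Kvec W l m n (j, i)) [1..<length as + 1] in
          (\<exists>bs. set bs \<subseteq> basic_blocks \<and> Ks = concat bs @ [1]) \<or>
          (\<exists>bs1 s bs2. set bs1 \<subseteq> basic_blocks \<and> set bs2 \<subseteq> basic_blocks \<and>
                s \<in> special_blocks \<and> Ks = concat bs1 @ s @ concat bs2 @ [0])))"
proof -
  let ?N = "length as"
  obtain K where K: "\<And>i. i \<in> {1..?N} \<Longrightarrow> Kvec W l m n (j, i) = of_int (K i)"
    using type_X_minus1_Kvec_int[OF assms(2-4)] by blast
  let ?b = "\<lambda>i. if i \<le> ?N then int (l (j, i)) + 1 - K i else 0"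
  interpret chain_inequalities ?N "\<lambda>i. int (as ! (i - 1))" ?b K
    by (rule chain_inequalities_of_type_X_minus1[OF assms(1-4) K])
  have KN: "Kvec W l m n (j, ?N) = of_int (K ?N)" using K N_pos by simp
  have Ks: "map (\<lambda>i. Kvec W l m n (j, i)) [1..<?N + 1] = map (\<lambda>i. of_int (K i)) [1..<?N + 1]"
    using K by (intro map_cong) auto
  have "K ?N \<le> int (l (j, ?N))" using b_last_pos by simp
  moreover have "chain_K_shape (map (\<lambda>i. of_int (K i)) [1..<?N + 1])" if "K ?N \<ge> 0"
  proof -
    interpret chain_inequalities_nonneg ?N "\<lambda>i. int (as ! (i - 1))" ?b K
      using that by unfold_locales
    have "(of_int (\<Sum>i=1..?N. K i) :: rat) = of_int 1"
      using assms(5) K by (simp add: of_int_sum)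
    then show ?thesis
      by (intro K_sequence_shape) (simp only: of_int_eq_iff)
  qed
  ultimately show ?thesis
    unfolding Let_def Ks KN chain_K_shape_def[symmetric] by simp
qed

end
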